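(* For all $m\ge2$ (and all $n$, with the convention below), $$A_{n,m}(u,v)=B_{n-1,m}(uv)+A_{n-1,m}(1,v)+A_{n-2,m-1}(1,uv)+\frac{uv}{1-uv}\Big(A_{n-1,m-1}(1,uv)-(uv)^mA_{n-1,m-1}(1,1)\Big)$$ and $$B_{n,m}(v)=B_{n-1,m}(v)+A_{n-2,m-1}(1,v)+\frac{v}{1-v}\Big(A_{n-1,m-1}(1,v)-v^mA_{n-1,m-1}(1,1)\Big).$$
   Context: An ascent sequence of length $n$ is a sequence $x_1\cdots x_n$ of non-negative integers with $x_1=0$ and $x_i\le \mathrm{asc}(x_1\cdots x_{i-1})+1$ for $1<i\le n$, where $\mathrm{asc}$ counts ascents (indices $j$ with $x_j<x_{j+1}$). It avoids $021$ if there are no $i<j<k$ with $x_i<x_k<x_j$. For $n\ge1$, $0\le s\le r\le m<n$, let $a_{n,m,r,s}$ be the number of $021$-avoiding ascent sequences of length $n$ with exactly $m$ ascents, largest letter $r$ and last letter $s$. Define $A_{n,m,r}(u)=\sum_{s=0}^r a_{n,m,r,s}u^s$, $A_{n,m}(u,v)=\sum_{r=0}^m A_{n,m,r}(u)v^r$, and $B_{n,m}(v)=\sum_{r=0}^m a_{n,m,r,r}v^r$ for $n>m\ge0$, with all these polynomials taken to be $0$ when $n\le m$ or $n<1$. (The quotients by $1-uv$ and $1-v$ are polynomials.) *)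

theory Defs
  imports Complex_Main
begin

definition asc :: "nat list \<Rightarrow> nat" where
  "asc xs = card {j. Suc j < length xs \<and> xs ! j < xs ! Suc j}"

definition ascent_seq :: "nat list \<Rightarrow> bool" where
  "ascent_seq xs \<longleftrightarrow> xs \<noteq> [] \<and> xs ! 0 = 0 \<and>
     (\<forall>i. 0 < i \<and> i < length xs \<longrightarrow> xs ! i \<le> asc (take i xs) + 1)"

definition avoids021 :: "nat list \<Rightarrow> bool" where
  "avoids021 xs \<longleftrightarrow> \<not> (\<exists>i j k. i < j \<and> j < k \<and> k < length xs \<and>
      xs ! i < xs ! k \<and> xs ! k < xs ! j)"

definition acount :: "nat \<Rightarrow> nat \<Rightarrow> nat \<Rightarrow> nat \<Rightarrow> nat" where
  "acount n m r s = card {xs. length xs = n \<and> ascent_seq xs \<and> avoids021 xs \<and>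
      asc xs = m \<and> Max (set xs) = r \<and> last xs = s}"

definition Apoly3 :: "nat \<Rightarrow> nat \<Rightarrow> nat \<Rightarrow> real \<Rightarrow> real" where
  "Apoly3 n m r u = (if n \<le> m \<or> n < 1 then 0
      else (\<Sum>s=0..r. real (acount n m r s) * u ^ s))"

definition Apoly :: "nat \<Rightarrow> nat \<Rightarrow> real \<Rightarrow> real \<Rightarrow> real" where
  "Apoly n m u v = (if n \<le> m \<or> n < 1 then 0
      else (\<Sum>r=0..m. Apoly3 n m r u * v ^ r))"

definition Bpoly :: "nat \<Rightarrow> nat \<Rightarrow> real \<Rightarrow> real" where
  "Bpoly n m v = (if n \<le> m \<or> n < 1 then 0
      else (\<Sum>r=0..m. real (acount n m r r) * v ^ r))"

end

theory Submission
  imports Defs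
begin

text \<open>Remove the last letter. In a 021-avoiding ascent sequence the last letter is either 0 or the
  maximum, and a letter a may be appended to ys iff a = 0 or a \<ge> max ys (plus the ascent bound).
  So the extensions of ys are: the letters 0 and last ys, which create no ascent and keep the
  maximum; or a letter a with a > last ys, max ys \<le> a \<le> m, which creates an ascent and makes a
  the new maximum and last letter. Summing u^last v^max over the second kind is a geometric series
  in uv starting at max ys (if last ys = 0) or max ys + 1 (if last ys = max ys); this produces the
  term uv/(1 - uv) (A(1,uv) - (uv)^m A(1,1)) together with the count of sequences ending in 0,
  which are exactly the extensions of sequences of length n - 2 by the letter 0.\<close>

lemma asc_snoc:
  assumes "ys \<noteq> []"
  shows "asc (ys @ [a]) = asc ys + (if last ys < a then 1 else 0)"
proof -
  let ?J = "\<lambda>xs. {j. Suc j < length xs \<and> xs ! j < xs ! Suc j}"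
  have split: "?J (ys @ [a]) = ?J ys \<union> (if last ys < a then {length ys - 1} else {})"
  proof (rule set_eqI)
    fix j
    consider "Suc j < length ys" | "Suc j = length ys" | "length ys < Suc j" by linarith
    then show "j \<in> ?J (ys @ [a]) \<longleftrightarrow> j \<in> ?J ys \<union> (if last ys < a then {length ys - 1} else {})"
    proof cases
      case 2
      then have "j = length ys - 1" by simp
      with 2 show ?thesis using assms by (auto simp: nth_append last_conv_nth)
    qed (use assms in \<open>auto simp: nth_append\<close>)
  qed
  have "finite (?J ys)"
    by (rule finite_subset[of _ "{..<length ys}"]) auto
  then show ?thesis
    unfolding asc_def split by (subst card_Un_disjoint) auto
qed

lemma asc_le_length: "asc xs \<le> length xs - 1"
proof -
  have "{j. Suc j < length xs \<and> xs ! j < xs ! Suc j} \<subseteq> {..<length xs - 1}" by auto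
  from card_mono[OF _ this] show ?thesis unfolding asc_def by simp
qed

lemma ascent_seq_snoc:
  assumes "ys \<noteq> []"
  shows "ascent_seq (ys @ [a]) \<longleftrightarrow> ascent_seq ys \<and> a \<le> asc ys + 1"
proof -
  have prefix: "(ys @ [a]) ! i \<le> asc (take i (ys @ [a])) + 1 \<longleftrightarrow> ys ! i \<le> asc (take i ys) + 1"
    if "i < length ys" for i
    using that by (simp add: nth_append)
  have "(\<forall>i. 0 < i \<and> i < length (ys @ [a]) \<longrightarrow> (ys @ [a]) ! i \<le> asc (take i (ys @ [a])) + 1)
      \<longleftrightarrow> (\<forall>i. 0 < i \<and> i < length ys \<longrightarrow> ys ! i \<le> asc (take i ys) + 1) \<and> a \<le> asc ys + 1"
    (is "?all_snoc \<longleftrightarrow> ?all \<and> _")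
  proof
    assume all_snoc: ?all_snoc
    have ?all
    proof (intro allI impI)
      fix i assume "0 < i \<and> i < length ys"
      then show "ys ! i \<le> asc (take i ys) + 1" using all_snoc prefix[of i] by simp
    qed
    moreover have "(ys @ [a]) ! length ys \<le> asc (take (length ys) (ys @ [a])) + 1"
      using spec[OF all_snoc, of "length ys"] assms by simp
    ultimately show "?all \<and> a \<le> asc ys + 1" by simp
  next
    assume "?all \<and> a \<le> asc ys + 1"
    then show ?all_snoc
      using prefix by (auto simp: less_Suc_eq)
  qed
  then show ?thesis
    using assms unfolding ascent_seq_def by (simp add: nth_append)
qed

lemma avoids021_snoc:
  assumes "ys \<noteq> []" "ys ! 0 = 0"
  shows "avoids021 (ys @ [a]) \<longleftrightarrow> avoids021 ys \<and> (a = 0 \<or> Max (set ys) \<le> a)"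
proof
  assume snoc: "avoids021 (ys @ [a])"
  have "avoids021 ys"
    unfolding avoids021_def
  proof clarify
    fix i j k
    assume "i < j" "j < k" "k < length ys" "ys ! i < ys ! k" "ys ! k < ys ! j"
    then have "i < j \<and> j < k \<and> k < length (ys @ [a])
        \<and> (ys @ [a]) ! i < (ys @ [a]) ! k \<and> (ys @ [a]) ! k < (ys @ [a]) ! j"
      by (simp add: nth_append)
    then show False using snoc unfolding avoids021_def by blast
  qed
  moreover have "a = 0 \<or> Max (set ys) \<le> a"
  proof (rule ccontr)
    assume a: "\<not> (a = 0 \<or> Max (set ys) \<le> a)"
    then have "0 < a" "a < Max (set ys)" by linarith+
    have "Max (set ys) \<in> set ys" using assms(1) by simp
    then obtain j where j: "j < length ys" "ys ! j = Max (set ys)"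
      by (meson in_set_conv_nth)
    have "0 < j"
    proof (rule gr0I)
      assume "j = 0"
      with j assms have "Max (set ys) = 0" by simp
      with \<open>0 < a\<close> \<open>a < Max (set ys)\<close> show False by simp
    qed
    with j \<open>0 < a\<close> \<open>a < Max (set ys)\<close> assms have "0 < j \<and> j < length ys \<and> length ys < length (ys @ [a])
        \<and> (ys @ [a]) ! 0 < (ys @ [a]) ! length ys \<and> (ys @ [a]) ! length ys < (ys @ [a]) ! j"
      by (simp add: nth_append)
    then show False using snoc unfolding avoids021_def by blast
  qed
  ultimately show "avoids021 ys \<and> (a = 0 \<or> Max (set ys) \<le> a)" ..
next
  assume avoid: "avoids021 ys \<and> (a = 0 \<or> Max (set ys) \<le> a)"
  show "avoids021 (ys @ [a])"
    unfolding avoids021_def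
  proof clarify
    fix i j k
    assume ijk: "i < j" "j < k" "k < length (ys @ [a])"
      "(ys @ [a]) ! i < (ys @ [a]) ! k" "(ys @ [a]) ! k < (ys @ [a]) ! j"
    show False
    proof (cases "k < length ys")
      case True
      with ijk have "ys ! i < ys ! k" "ys ! k < ys ! j"
        by (simp_all add: nth_append)
      with True ijk(1,2) show False using avoid unfolding avoids021_def by blast
    next
      case False
      with ijk have "ys ! i < a" "a < ys ! j" "j < length ys"
        by (simp_all add: nth_append)
      moreover from \<open>j < length ys\<close> have "ys ! j \<le> Max (set ys)" by simp
      ultimately show False using avoid by linarith
    qed
  qed
qed

definition ascent021 :: "nat list \<Rightarrow> bool" where
  "ascent021 xs \<longleftrightarrow> ascent_seq xs \<and> avoids021 xs"

lemma ascent021_nonempty: "ascent021 xs \<Longrightarrow> xs \<noteq> []"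
  unfolding ascent021_def ascent_seq_def by simp

lemma ascent021_snoc:
  assumes "ys \<noteq> []"
  shows "ascent021 (ys @ [a]) \<longleftrightarrow> ascent021 ys \<and> a \<le> asc ys + 1 \<and> (a = 0 \<or> Max (set ys) \<le> a)"
  using ascent_seq_snoc[OF assms] avoids021_snoc[OF assms]
  unfolding ascent021_def ascent_seq_def by auto

lemma ascent021_invariants:
  "ascent021 xs \<Longrightarrow> Max (set xs) \<le> asc xs \<and> (last xs = 0 \<or> last xs = Max (set xs))
     \<and> (0 < asc xs \<longrightarrow> 0 < Max (set xs))"
proof (induction xs rule: rev_induct)
  case Nil
  then show ?case using ascent021_nonempty by blast
next
  case (snoc a ys)
  show ?case
  proof (cases "ys = []")
    case True
    then show ?thesis
      using snoc.prems unfolding ascent021_def ascent_seq_def asc_def by simp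
  next
    case False
    have "ascent021 ys" and a_le: "a \<le> asc ys + 1" and a_cases: "a = 0 \<or> Max (set ys) \<le> a"
      using snoc.prems ascent021_snoc[OF False] by auto
    note IH = snoc.IH[OF this(1)]
    have "last ys \<le> Max (set ys)" using False by simp
    show ?thesis
    proof (cases "last ys < a")
      case True
      then have "Max (set ys) \<le> a" using a_cases by auto
      then have "Max (set (ys @ [a])) = a"
        using \<open>ys \<noteq> []\<close> by (intro Max_eqI) auto
      moreover have "asc (ys @ [a]) = asc ys + 1"
        using True \<open>ys \<noteq> []\<close> by (simp add: asc_snoc)
      ultimately show ?thesis using True a_le by simp
    next
      case False
      then have "a \<le> Max (set ys)" using \<open>last ys \<le> Max (set ys)\<close> by linarith
      then have "Max (set (ys @ [a])) = Max (set ys)" "a = 0 \<or> a = Max (set ys)"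
        using a_cases \<open>ys \<noteq> []\<close> by (simp_all add: max_absorb2, linarith)
      moreover have "asc (ys @ [a]) = asc ys" using False \<open>ys \<noteq> []\<close> by (simp add: asc_snoc)
      ultimately show ?thesis using IH by auto
    qed
  qed
qed

lemma ascent021_Max_le_asc: "ascent021 xs \<Longrightarrow> Max (set xs) \<le> asc xs"
  using ascent021_invariants by blast

lemma ascent021_last: "ascent021 xs \<Longrightarrow> last xs = 0 \<or> last xs = Max (set xs)"
  using ascent021_invariants by blast

lemma ascent021_Max_pos: "ascent021 xs \<Longrightarrow> 0 < asc xs \<Longrightarrow> 0 < Max (set xs)"
  using ascent021_invariants by blast

definition asc021_seqs :: "nat \<Rightarrow> nat \<Rightarrow> nat list set" where
  "asc021_seqs n m = {xs. length xs = n \<and> ascent021 xs \<and> asc xs = m}"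

lemma asc021_seqsD:
  assumes "xs \<in> asc021_seqs n m"
  shows "length xs = n" "ascent021 xs" "asc xs = m"
  using assms unfolding asc021_seqs_def by auto

lemma asc021_seqs_Max_le: "xs \<in> asc021_seqs n m \<Longrightarrow> Max (set xs) \<le> m"
  using ascent021_Max_le_asc asc021_seqsD by metis

lemma asc021_seqs_last_le_Max: "xs \<in> asc021_seqs n m \<Longrightarrow> last xs \<le> Max (set xs)"
  using asc021_seqsD(2) ascent021_nonempty by simp

lemma finite_asc021_seqs: "finite (asc021_seqs n m)"
proof (rule finite_subset)
  show "asc021_seqs n m \<subseteq> {xs. set xs \<subseteq> {0..m} \<and> length xs = n}"
  proof
    fix xs assume xs: "xs \<in> asc021_seqs n m"
    have "x \<le> m" if "x \<in> set xs" for x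
      using that asc021_seqs_Max_le[OF xs] by (meson List.finite_set Max_ge order_trans)
    then show "xs \<in> {xs. set xs \<subseteq> {0..m} \<and> length xs = n}"
      using asc021_seqsD(1)[OF xs] by auto
  qed
qed (simp add: finite_lists_length_eq)

lemma asc021_seqs_empty: "n \<le> m \<Longrightarrow> asc021_seqs n m = {}"
proof (rule equals0I)
  fix xs assume "n \<le> m" "xs \<in> asc021_seqs n m"
  then have "xs \<noteq> []" "asc xs \<le> length xs - 1" "asc xs \<ge> length xs"
    using asc_le_length[of xs] by (auto simp: asc021_seqs_def dest: ascent021_nonempty)
  then show False by (cases xs) auto
qed

lemma asc021_seqs_Max_pos: "xs \<in> asc021_seqs n m \<Longrightarrow> 0 < m \<Longrightarrow> 0 < Max (set xs)"
  using ascent021_Max_pos asc021_seqsD by metis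

definition last_max_sum :: "(nat \<Rightarrow> nat \<Rightarrow> real) \<Rightarrow> nat \<Rightarrow> nat \<Rightarrow> real" where
  "last_max_sum g n m = (\<Sum>xs\<in>asc021_seqs n m. g (last xs) (Max (set xs)))"

lemma last_max_sum_acount:
  "last_max_sum g n m = (\<Sum>r=0..m. \<Sum>s=0..r. real (acount n m r s) * g s r)"
proof -
  let ?S = "asc021_seqs n m" and ?key = "\<lambda>xs. (Max (set xs), last xs)"
  have key_range: "?key ` ?S \<subseteq> Sigma {0..m} (\<lambda>r. {0..r})"
    using asc021_seqs_Max_le asc021_seqs_last_le_Max by fastforce
  have fibre: "(\<Sum>xs\<in>{xs \<in> ?S. ?key xs = p}. g (last xs) (Max (set xs)))
      = real (acount n m (fst p) (snd p)) * g (snd p) (fst p)" for p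
  proof -
    have "{xs \<in> ?S. ?key xs = p}
        = {xs. length xs = n \<and> ascent_seq xs \<and> avoids021 xs \<and> asc xs = m
                \<and> Max (set xs) = fst p \<and> last xs = snd p}"
      unfolding asc021_seqs_def ascent021_def by auto
    then show ?thesis unfolding acount_def by simp
  qed
  have "last_max_sum g n m
      = (\<Sum>p\<in>Sigma {0..m} (\<lambda>r. {0..r}). \<Sum>xs\<in>{xs \<in> ?S. ?key xs = p}. g (last xs) (Max (set xs)))"
    unfolding last_max_sum_def
    by (rule sum.group[symmetric]) (use finite_asc021_seqs key_range in auto)
  also have "\<dots> = (\<Sum>r=0..m. \<Sum>s=0..r. real (acount n m r s) * g s r)"
    by (simp add: fibre sum.Sigma split_def)
  finally show ?thesis .
qed

lemma Apoly_eq_last_max_sum: "Apoly n m u v = last_max_sum (\<lambda>l M. u ^ l * v ^ M) n m"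
proof (cases "n \<le> m")
  case True
  then show ?thesis
    unfolding Apoly_def last_max_sum_def by (simp add: asc021_seqs_empty)
next
  case False
  then show ?thesis
    unfolding Apoly_def Apoly3_def last_max_sum_acount
    by (simp add: sum_distrib_right mult.assoc)
qed

lemma Apoly_one: "Apoly n m 1 v = (\<Sum>xs\<in>asc021_seqs n m. v ^ Max (set xs))"
  by (simp add: Apoly_eq_last_max_sum last_max_sum_def)

lemma Bpoly_eq_last_max_sum:
  "Bpoly n m v = last_max_sum (\<lambda>l M. if l = M then v ^ M else 0) n m"
proof (cases "n \<le> m")
  case True
  then show ?thesis
    unfolding Bpoly_def last_max_sum_def by (simp add: asc021_seqs_empty)
next
  case False
  have "(\<Sum>s=0..r. real (acount n m r s) * (if s = r then v ^ r else 0))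
      = real (acount n m r r) * v ^ r" for r
  proof -
    have "(\<Sum>s=0..r. real (acount n m r s) * (if s = r then v ^ r else 0))
        = (\<Sum>s=0..r. if s = r then real (acount n m r r) * v ^ r else 0)"
      by (rule sum.cong) auto
    then show ?thesis by simp
  qed
  then show ?thesis
    using False unfolding Bpoly_def last_max_sum_acount by simp
qed

lemma snoc_mem_asc021_seqs:
  assumes "ys \<noteq> []" "m \<ge> 1"
  shows "ys @ [a] \<in> asc021_seqs (Suc k) m \<longleftrightarrow>
           ys \<in> asc021_seqs k m \<and> a \<in> {0, last ys}
         \<or> ys \<in> asc021_seqs k (m - 1) \<and> a \<in> {max (Suc (last ys)) (Max (set ys))..m}"
proof (cases "last ys < a")
  case True
  then have "a \<noteq> 0" by simp
  with True show ?thesis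
    using assms by (auto simp: asc021_seqs_def ascent021_snoc asc_snoc)
next
  case False
  have "last ys \<le> Max (set ys)" using assms(1) by simp
  moreover have "(a \<le> asc ys + 1 \<and> (a = 0 \<or> Max (set ys) \<le> a)) \<longleftrightarrow> a = 0 \<or> a = last ys"
    if "ascent021 ys"
    using that False \<open>last ys \<le> Max (set ys)\<close> ascent021_last[OF that] ascent021_Max_le_asc[OF that]
    by auto
  ultimately show ?thesis
    using False assms by (auto simp: asc021_seqs_def ascent021_snoc asc_snoc)
qed

lemma sum_asc021_seqs_snoc:
  assumes "n \<ge> 2" "m \<ge> 1"
  shows "(\<Sum>xs\<in>asc021_seqs n m. F xs) =
           (\<Sum>ys\<in>asc021_seqs (n - 1) m. \<Sum>a\<in>{0, last ys}. F (ys @ [a]))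
         + (\<Sum>ys\<in>asc021_seqs (n - 1) (m - 1). \<Sum>a\<in>{max (Suc (last ys)) (Max (set ys))..m}. F (ys @ [a]))"
proof -
  define Keep where "Keep = Sigma (asc021_seqs (n - 1) m) (\<lambda>ys. {0, last ys})"
  define New where
    "New = Sigma (asc021_seqs (n - 1) (m - 1)) (\<lambda>ys. {max (Suc (last ys)) (Max (set ys))..m})"
  define snoc :: "nat list \<times> nat \<Rightarrow> nat list" where "snoc = (\<lambda>(ys, a). ys @ [a])"
  have length: "Suc (n - 1) = n" using assms(1) by simp
  have nonempty: "ys \<noteq> []" if "ys \<in> asc021_seqs (n - 1) k" for ys k
    using that assms(1) by (auto simp: asc021_seqs_def)
  have image: "snoc ` (Keep \<union> New) = asc021_seqs n m"
  proof
    show "snoc ` (Keep \<union> New) \<subseteq> asc021_seqs n m"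
    proof clarify
      fix ys a assume p: "(ys, a) \<in> Keep \<union> New"
      then have "ys \<noteq> []"
        using nonempty unfolding Keep_def New_def by blast
      then have "ys @ [a] \<in> asc021_seqs (Suc (n - 1)) m"
        using p snoc_mem_asc021_seqs[OF _ assms(2)] unfolding Keep_def New_def by blast
      then show "snoc (ys, a) \<in> asc021_seqs n m"
        unfolding snoc_def length by simp
    qed
  next
    show "asc021_seqs n m \<subseteq> snoc ` (Keep \<union> New)"
    proof
      fix xs assume xs: "xs \<in> asc021_seqs n m"
      have "length xs = n" by (rule asc021_seqsD(1)[OF xs])
      then have "length (butlast xs) \<noteq> 0" "xs \<noteq> []"
        using assms(1) by auto
      then have "butlast xs \<noteq> []" and split: "xs = butlast xs @ [last xs]"
        by (metis list.size(3), simp)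
      then have "(butlast xs, last xs) \<in> Keep \<union> New"
        using xs snoc_mem_asc021_seqs[OF _ assms(2), of "butlast xs" "last xs" "n - 1"]
        unfolding Keep_def New_def length by simp
      then show "xs \<in> snoc ` (Keep \<union> New)"
        using split unfolding snoc_def by force
    qed
  qed
  have "inj_on snoc (Keep \<union> New)"
    unfolding snoc_def by (rule inj_onI) auto
  then have "(\<Sum>xs\<in>asc021_seqs n m. F xs) = (\<Sum>p\<in>Keep \<union> New. F (snoc p))"
    unfolding image[symmetric] by (simp add: sum.reindex)
  also have "\<dots> = (\<Sum>p\<in>Keep. F (snoc p)) + (\<Sum>p\<in>New. F (snoc p))"
  proof (rule sum.union_disjoint)
    show "finite Keep" "finite New"
      unfolding Keep_def New_def by (simp_all add: finite_asc021_seqs)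
    have "asc021_seqs (n - 1) m \<inter> asc021_seqs (n - 1) (m - 1) = {}"
      using assms(2) by (auto simp: asc021_seqs_def)
    then show "Keep \<inter> New = {}"
      unfolding Keep_def New_def by blast
  qed
  also have "\<dots> = (\<Sum>ys\<in>asc021_seqs (n - 1) m. \<Sum>a\<in>{0, last ys}. F (ys @ [a]))
         + (\<Sum>ys\<in>asc021_seqs (n - 1) (m - 1). \<Sum>a\<in>{max (Suc (last ys)) (Max (set ys))..m}. F (ys @ [a]))"
    unfolding Keep_def New_def snoc_def
    by (simp add: sum.Sigma finite_asc021_seqs split_def)
  finally show ?thesis .
qed

lemma last_max_sum_recurrence:
  assumes "n \<ge> 2" "m \<ge> 1"
  shows "last_max_sum g n m =
           (\<Sum>ys\<in>asc021_seqs (n - 1) m. g 0 (Max (set ys))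
              + (if last ys = Max (set ys) then g (Max (set ys)) (Max (set ys)) else 0))
         + (\<Sum>ys\<in>asc021_seqs (n - 1) (m - 1). \<Sum>a\<in>{max (Suc (last ys)) (Max (set ys))..m}. g a a)"
proof -
  have keep: "(\<Sum>a\<in>{0, last ys}. g (last (ys @ [a])) (Max (set (ys @ [a]))))
      = g 0 (Max (set ys)) + (if last ys = Max (set ys) then g (Max (set ys)) (Max (set ys)) else 0)"
    if "ys \<in> asc021_seqs (n - 1) m" for ys
  proof -
    from that have "ascent021 ys" "0 < Max (set ys)"
      using assms(2) ascent021_Max_pos by (auto simp: asc021_seqs_def)
    then consider "last ys = 0" | "last ys = Max (set ys)" "last ys \<noteq> 0"
      using ascent021_last by fastforce
    then show ?thesis
      using \<open>ascent021 ys\<close> \<open>0 < Max (set ys)\<close> ascent021_nonempty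
      by cases (simp_all add: max_absorb2)
  qed
  have new: "g (last (ys @ [a])) (Max (set (ys @ [a]))) = g a a"
    if "ys \<in> asc021_seqs (n - 1) (m - 1)" "a \<in> {max (Suc (last ys)) (Max (set ys))..m}" for ys a
    using that by (auto simp: max_absorb2 asc021_seqs_def dest!: ascent021_nonempty)
  have keep_sum: "(\<Sum>ys\<in>asc021_seqs (n - 1) m. \<Sum>a\<in>{0, last ys}. g (last (ys @ [a])) (Max (set (ys @ [a]))))
      = (\<Sum>ys\<in>asc021_seqs (n - 1) m. g 0 (Max (set ys))
          + (if last ys = Max (set ys) then g (Max (set ys)) (Max (set ys)) else 0))"
    by (rule sum.cong[OF refl keep])
  have new_sum: "(\<Sum>ys\<in>asc021_seqs (n - 1) (m - 1). \<Sum>a\<in>{max (Suc (last ys)) (Max (set ys))..m}.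
        g (last (ys @ [a])) (Max (set (ys @ [a]))))
      = (\<Sum>ys\<in>asc021_seqs (n - 1) (m - 1). \<Sum>a\<in>{max (Suc (last ys)) (Max (set ys))..m}. g a a)"
    by (intro sum.cong refl new)
  show ?thesis
    unfolding last_max_sum_def sum_asc021_seqs_snoc[OF assms] keep_sum new_sum ..
qed

lemma geometric_sum_Suc:
  fixes w :: real
  assumes "w \<noteq> 1" "M \<le> m"
  shows "(\<Sum>a=Suc M..m. w ^ a) = w / (1 - w) * (w ^ M - w ^ m)"
proof (cases "M = m")
  case False
  with assms show ?thesis by (simp add: sum_gp field_simps)
qed simp

text \<open>Sequences ending in 0 are exactly the extensions by 0 of shorter ones, which keeps
  both the maximum (positive, as k \<ge> 1) and the number of ascents.\<close>
lemma last_max_sum_last_zero: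
  fixes w :: real
  assumes "k \<ge> 1"
  shows "last_max_sum (\<lambda>l M. if l = 0 then w ^ M else 0) n k = Apoly (n - 1) k 1 w"
proof (cases "n \<ge> 2")
  case False
  then show ?thesis
    using assms unfolding Apoly_eq_last_max_sum last_max_sum_def by (simp add: asc021_seqs_empty)
next
  case True
  let ?g = "\<lambda>l M. if l = 0 then w ^ M else 0"
  have keep: "?g 0 (Max (set ys)) + (if last ys = Max (set ys) then ?g (Max (set ys)) (Max (set ys)) else 0)
      = w ^ Max (set ys)" if "ys \<in> asc021_seqs (n - 1) k" for ys
    using asc021_seqs_Max_pos[OF that] assms by simp
  have new: "(\<Sum>a\<in>{max (Suc (last ys)) (Max (set ys))..k}. ?g a a) = 0" for ys
    by (rule sum.neutral) simp
  have "last_max_sum ?g n k = (\<Sum>ys\<in>asc021_seqs (n - 1) k. w ^ Max (set ys))"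
    unfolding last_max_sum_recurrence[OF True assms] new sum.neutral_const add_0_right
    by (rule sum.cong[OF refl keep])
  then show ?thesis
    by (simp add: Apoly_eq_last_max_sum last_max_sum_def)
qed

lemma sum_new_maxima:
  fixes w :: real
  assumes "m \<ge> 2" "w \<noteq> 1"
  shows "(\<Sum>ys\<in>asc021_seqs n (m - 1). \<Sum>a\<in>{max (Suc (last ys)) (Max (set ys))..m}. w ^ a)
     = Apoly (n - 1) (m - 1) 1 w + w / (1 - w) * (Apoly n (m - 1) 1 w - w ^ m * Apoly n (m - 1) 1 1)"
proof -
  have per_seq: "(\<Sum>a\<in>{max (Suc (last ys)) (Max (set ys))..m}. w ^ a)
      = (if last ys = 0 then w ^ Max (set ys) else 0) + w / (1 - w) * (w ^ Max (set ys) - w ^ m)"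
    if ys: "ys \<in> asc021_seqs n (m - 1)" for ys
  proof -
    have "0 < Max (set ys)" "Max (set ys) \<le> m - 1"
      using asc021_seqs_Max_pos[OF ys] asc021_seqs_Max_le[OF ys] assms(1) by auto
    moreover have "last ys = 0 \<or> last ys = Max (set ys)"
      using ascent021_last asc021_seqsD(2)[OF ys] by blast
    ultimately have "{max (Suc (last ys)) (Max (set ys))..m}
        = (if last ys = 0 then {Max (set ys)} else {}) \<union> {Suc (Max (set ys))..m}"
      by auto
    then show ?thesis
      using geometric_sum_Suc[OF assms(2), of "Max (set ys)" m] \<open>Max (set ys) \<le> m - 1\<close>
      by (simp add: sum.union_disjoint)
  qed
  have last_zero: "last_max_sum (\<lambda>l M. if l = 0 then w ^ M else 0) n (m - 1) = Apoly (n - 1) (m - 1) 1 w"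
    using assms(1) by (simp add: last_max_sum_last_zero)
  have geometric_part: "(\<Sum>ys\<in>asc021_seqs n (m - 1). w ^ Max (set ys) - w ^ m)
      = Apoly n (m - 1) 1 w - w ^ m * Apoly n (m - 1) 1 1"
    by (simp add: Apoly_one sum_subtractf)
  have "(\<Sum>ys\<in>asc021_seqs n (m - 1). \<Sum>a\<in>{max (Suc (last ys)) (Max (set ys))..m}. w ^ a)
      = (\<Sum>ys\<in>asc021_seqs n (m - 1).
           (if last ys = 0 then w ^ Max (set ys) else 0) + w / (1 - w) * (w ^ Max (set ys) - w ^ m))"
    by (rule sum.cong[OF refl per_seq])
  also have "\<dots> = last_max_sum (\<lambda>l M. if l = 0 then w ^ M else 0) n (m - 1)
      + w / (1 - w) * (\<Sum>ys\<in>asc021_seqs n (m - 1). w ^ Max (set ys) - w ^ m)"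
    unfolding last_max_sum_def by (simp only: sum.distrib sum_distrib_left)
  finally show ?thesis
    unfolding last_zero geometric_part .
qed

lemma Apoly_recurrence:
  assumes "n \<ge> 2" "m \<ge> 1"
  shows "Apoly n m u v = Apoly (n - 1) m 1 v + Bpoly (n - 1) m (u * v)
    + (\<Sum>ys\<in>asc021_seqs (n - 1) (m - 1). \<Sum>a\<in>{max (Suc (last ys)) (Max (set ys))..m}. (u * v) ^ a)"
  unfolding Apoly_eq_last_max_sum[of n] last_max_sum_recurrence[OF assms]
  unfolding Apoly_one Bpoly_eq_last_max_sum last_max_sum_def power_mult_distrib
  by (simp add: sum.distrib)

lemma Bpoly_recurrence:
  assumes "n \<ge> 2" "m \<ge> 1"
  shows "Bpoly n m v = Bpoly (n - 1) m v
    + (\<Sum>ys\<in>asc021_seqs (n - 1) (m - 1). \<Sum>a\<in>{max (Suc (last ys)) (Max (set ys))..m}. v ^ a)"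
  unfolding Bpoly_eq_last_max_sum last_max_sum_recurrence[OF assms]
  unfolding last_max_sum_def
  using asc021_seqs_Max_pos assms(2) by (intro arg_cong2[where f = "(+)"] sum.cong refl) force+

theorem lemma2:
  fixes n m :: nat and u v :: real
  assumes "m \<ge> 2"
  shows "(u * v \<noteq> 1 \<longrightarrow>
           Apoly n m u v = Bpoly (n - 1) m (u * v) + Apoly (n - 1) m 1 v
             + Apoly (n - 2) (m - 1) 1 (u * v)
             + (u * v) / (1 - u * v) *
                 (Apoly (n - 1) (m - 1) 1 (u * v) - (u * v) ^ m * Apoly (n - 1) (m - 1) 1 1))
         \<and> (v \<noteq> 1 \<longrightarrow>
           Bpoly n m v = Bpoly (n - 1) m v + Apoly (n - 2) (m - 1) 1 v
             + v / (1 - v) * (Apoly (n - 1) (m - 1) 1 v - v ^ m * Apoly (n - 1) (m - 1) 1 1))"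
proof (cases "n \<ge> 2")
  case False
  with assms show ?thesis
    unfolding Apoly_eq_last_max_sum Bpoly_eq_last_max_sum last_max_sum_def
    by (simp add: asc021_seqs_empty)
next
  case True
  have "m \<ge> 1" "n - 1 - 1 = n - 2" using assms by simp_all
  note new_maxima = sum_new_maxima[OF assms, of _ "n - 1", unfolded this(2)]
  show ?thesis
    using Apoly_recurrence[OF True \<open>m \<ge> 1\<close>, of u v] Bpoly_recurrence[OF True \<open>m \<ge> 1\<close>, of v]
      new_maxima[of "u * v"] new_maxima[of v]
    by auto
qed

end
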